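(* Let $X,Y\subseteq\mathbb{P}^n$ be real closed subschemes such that $X\cap Y=\operatorname{Span}(X)\cap\operatorname{Span}(Y)$. Let $f\in\mathbb{R}[X\cup Y]_2$ and suppose that the restrictions $f|_X\in\mathbb{R}[X]_2$ and $f|_Y\in\mathbb{R}[Y]_2$ are each a sum of at most $r$ squares of linear forms in $\mathbb{R}[X]$ and $\mathbb{R}[Y]$ respectively. Then $f$ is a sum of at most $r$ squares of linear forms in $\mathbb{R}[X\cup Y]$.
   Context: For a subscheme $Z\subseteq\mathbb{P}^n$ with homogeneous ideal $I(Z)\subseteq\mathbb{R}[x_0,\dots,x_n]$, $\mathbb{R}[Z]=\mathbb{R}[x_0,\dots,x_n]/I(Z)$; $X\cup Y$ is defined by $I(X)\cap I(Y)$, and restriction maps $\mathbb{R}[X\cup Y]\to\mathbb{R}[X]$, $\mathbb{R}[X\cup Y]\to\mathbb{R}[Y]$ are the natural quotient maps. $\operatorname{Span}(Z)$ is the smallest projective linear subspace containing $Z$. *)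

theory Defs
  imports Complex_Main "HOL-Library.Poly_Mapping"
begin

type_synonym mpoly = "(nat \<Rightarrow>\<^sub>0 nat) \<Rightarrow>\<^sub>0 real"

definition mdeg :: "(nat \<Rightarrow>\<^sub>0 nat) \<Rightarrow> nat" where
  "mdeg m = (\<Sum>i\<in>Poly_Mapping.keys m. Poly_Mapping.lookup m i)"

definition polyring :: "nat \<Rightarrow> mpoly set" where
  "polyring n = {p. \<forall>m\<in>Poly_Mapping.keys p. \<forall>i\<in>Poly_Mapping.keys m. i \<le> n}"

definition homog :: "nat \<Rightarrow> mpoly \<Rightarrow> bool" where
  "homog d p \<longleftrightarrow> (\<forall>m\<in>Poly_Mapping.keys p. mdeg m = d)"

definition hcomp :: "nat \<Rightarrow> mpoly \<Rightarrow> mpoly" where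
  "hcomp d p = Abs_poly_mapping (\<lambda>m. if mdeg m = d then Poly_Mapping.lookup p m else 0)"

definition is_ideal :: "nat \<Rightarrow> mpoly set \<Rightarrow> bool" where
  "is_ideal n I \<longleftrightarrow> I \<subseteq> polyring n \<and> 0 \<in> I \<and>
     (\<forall>p\<in>I. \<forall>q\<in>I. p + q \<in> I) \<and>
     (\<forall>p\<in>I. \<forall>q\<in>polyring n. q * p \<in> I)"

definition homogeneous_ideal :: "nat \<Rightarrow> mpoly set \<Rightarrow> bool" where
  "homogeneous_ideal n I \<longleftrightarrow> is_ideal n I \<and> (\<forall>p\<in>I. \<forall>d. hcomp d p \<in> I)"

definition ideal_gen :: "nat \<Rightarrow> mpoly set \<Rightarrow> mpoly set" where
  "ideal_gen n S = \<Inter>{J. is_ideal n J \<and> S \<subseteq> J}"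

text \<open>Saturation (I : m^\<infinity>) with respect to the irrelevant ideal m = (x_0,...,x_n).\<close>
definition saturation :: "nat \<Rightarrow> mpoly set \<Rightarrow> mpoly set" where
  "saturation n I = {p \<in> polyring n. \<exists>k. \<forall>m. mdeg m = k \<and> (\<forall>i\<in>Poly_Mapping.keys m. i \<le> n)
      \<longrightarrow> Poly_Mapping.single m 1 * p \<in> I}"

text \<open>Closed subschemes of P^n are represented by their (saturated homogeneous) ideals I(Z).\<close>
definition subscheme_ideal :: "nat \<Rightarrow> mpoly set \<Rightarrow> bool" where
  "subscheme_ideal n I \<longleftrightarrow> homogeneous_ideal n I \<and> saturation n I = I"

definition linear_form :: "nat \<Rightarrow> mpoly \<Rightarrow> bool" where
  "linear_form n l \<longleftrightarrow> l \<in> polyring n \<and> homog 1 l"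

text \<open>Ideal of Span(Z): generated by the linear forms vanishing on Z.\<close>
definition span_ideal :: "nat \<Rightarrow> mpoly set \<Rightarrow> mpoly set" where
  "span_ideal n I = ideal_gen n {l \<in> I. linear_form n l}"

text \<open>Ideal of the scheme-theoretic intersection of the schemes with ideals I, J.\<close>
definition inter_ideal :: "nat \<Rightarrow> mpoly set \<Rightarrow> mpoly set \<Rightarrow> mpoly set" where
  "inter_ideal n I J = saturation n (ideal_gen n (I \<union> J))"

text \<open>The class of F in R[Z] = R[x]/I is a sum of at most r squares of linear forms of R[Z].\<close>
definition sos_lin_mod :: "nat \<Rightarrow> mpoly set \<Rightarrow> nat \<Rightarrow> mpoly \<Rightarrow> bool" where
  "sos_lin_mod n I r F \<longleftrightarrow> (\<exists>ls. length ls \<le> r \<and> (\<forall>l\<in>set ls. linear_form n l) \<and>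
      F - (\<Sum>l\<leftarrow>ls. l * l) \<in> I)"

end

theory Submission
  imports Defs
begin

text \<open>Write \<open>f = \<Sum>l\<^sub>i\<^sup>2\<close> modulo \<open>I(X)\<close> and \<open>f = \<Sum>m\<^sub>i\<^sup>2\<close> modulo \<open>I(Y)\<close>. The difference
  \<open>\<Sum>l\<^sub>i\<^sup>2 - \<Sum>m\<^sub>i\<^sup>2\<close> lies in \<open>I(X) + I(Y)\<close>, hence by hypothesis in the saturation of the ideal of
  \<open>Span(X) \<inter> Span(Y)\<close>, so the two quadratic forms agree on the real points of this linear space.
  Finitely many of these points detect the linear forms vanishing on it, and a composition of
  Householder reflections, one per point, turns \<open>(m\<^sub>i)\<close> into linear forms \<open>(v\<^sub>i)\<close> with
  \<open>\<Sum>v\<^sub>i\<^sup>2 = \<Sum>m\<^sub>i\<^sup>2\<close> and \<open>v\<^sub>i = l\<^sub>i\<close> on \<open>Span(X) \<inter> Span(Y)\<close>. Hence \<open>l\<^sub>i - v\<^sub>i = a\<^sub>i + b\<^sub>i\<close> with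
  linear \<open>a\<^sub>i \<in> I(X)\<close>, \<open>b\<^sub>i \<in> I(Y)\<close>, and \<open>k\<^sub>i = l\<^sub>i - a\<^sub>i = v\<^sub>i + b\<^sub>i\<close> satisfies \<open>f = \<Sum>k\<^sub>i\<^sup>2\<close> modulo both
  ideals.\<close>

section \<open>Evaluation at real points\<close>

definition mconst :: "real \<Rightarrow> mpoly" where
  "mconst c = Poly_Mapping.single 0 c"

definition mvar :: "nat \<Rightarrow> mpoly" where
  "mvar i = Poly_Mapping.single (Poly_Mapping.single i 1) 1"

definition monom_eval :: "(nat \<Rightarrow> real) \<Rightarrow> (nat \<Rightarrow>\<^sub>0 nat) \<Rightarrow> real" where
  "monom_eval x m = (\<Prod>i\<in>Poly_Mapping.keys m. x i ^ Poly_Mapping.lookup m i)"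

definition peval :: "(nat \<Rightarrow> real) \<Rightarrow> mpoly \<Rightarrow> real" where
  "peval x p = (\<Sum>m\<in>Poly_Mapping.keys p. Poly_Mapping.lookup p m * monom_eval x m)"

lemma monom_eval_superset:
  "finite S \<Longrightarrow> Poly_Mapping.keys m \<subseteq> S \<Longrightarrow>
     monom_eval x m = (\<Prod>i\<in>S. x i ^ Poly_Mapping.lookup m i)"
  unfolding monom_eval_def by (rule prod.mono_neutral_left) (auto simp: in_keys_iff)

lemma monom_eval_add: "monom_eval x (a + b) = monom_eval x a * monom_eval x b"
proof -
  let ?S = "Poly_Mapping.keys a \<union> Poly_Mapping.keys b"
  have "monom_eval x (a + b) = (\<Prod>i\<in>?S. x i ^ Poly_Mapping.lookup (a + b) i)"
    using keys_add[of a b] by (intro monom_eval_superset) auto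
  also have "\<dots> = (\<Prod>i\<in>?S. x i ^ Poly_Mapping.lookup a i) * (\<Prod>i\<in>?S. x i ^ Poly_Mapping.lookup b i)"
    by (simp add: lookup_add power_add prod.distrib)
  also have "\<dots> = monom_eval x a * monom_eval x b"
    by (subst (1 2) monom_eval_superset[of ?S]) auto
  finally show ?thesis .
qed

lemma monom_eval_zero [simp]: "monom_eval x 0 = 1"
  by (simp add: monom_eval_def)

lemma monom_eval_single [simp]: "monom_eval x (Poly_Mapping.single i k) = x i ^ k"
  by (simp add: monom_eval_def)

lemma peval_superset:
  "finite S \<Longrightarrow> Poly_Mapping.keys p \<subseteq> S \<Longrightarrow>
     peval x p = (\<Sum>m\<in>S. Poly_Mapping.lookup p m * monom_eval x m)"
  unfolding peval_def by (rule sum.mono_neutral_left) (auto simp: in_keys_iff)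

lemma peval_add: "peval x (p + q) = peval x p + peval x q"
proof -
  let ?S = "Poly_Mapping.keys p \<union> Poly_Mapping.keys q"
  have "peval x (p + q) = (\<Sum>m\<in>?S. Poly_Mapping.lookup (p + q) m * monom_eval x m)"
    using keys_add[of p q] by (intro peval_superset) auto
  also have "\<dots> = (\<Sum>m\<in>?S. Poly_Mapping.lookup p m * monom_eval x m)
                 + (\<Sum>m\<in>?S. Poly_Mapping.lookup q m * monom_eval x m)"
    by (simp add: lookup_add distrib_right sum.distrib)
  also have "\<dots> = peval x p + peval x q"
    by (subst (1 2) peval_superset[of ?S]) auto
  finally show ?thesis .
qed

lemma peval_zero [simp]: "peval x 0 = 0"
  by (simp add: peval_def)

lemma peval_diff: "peval x (p - q) = peval x p - peval x q"
  using peval_add[of x "p - q" q] by simp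

lemma peval_sum: "peval x (sum f A) = (\<Sum>a\<in>A. peval x (f a))"
  by (induction A rule: infinite_finite_induct) (auto simp: peval_add)

lemma peval_single [simp]: "peval x (Poly_Mapping.single m c) = c * monom_eval x m"
  by (simp add: peval_def)

lemma sum_singles_lookup: "(\<Sum>m\<in>Poly_Mapping.keys p. Poly_Mapping.single m (Poly_Mapping.lookup p m)) = p"
  by (rule poly_mapping_eqI) (simp add: lookup_sum lookup_single when_def in_keys_iff)

lemma peval_mult: "peval x (p * q) = peval x p * peval x q"
proof -
  have "p * q = (\<Sum>a\<in>Poly_Mapping.keys p. \<Sum>b\<in>Poly_Mapping.keys q.
        Poly_Mapping.single a (Poly_Mapping.lookup p a) * Poly_Mapping.single b (Poly_Mapping.lookup q b))"
    by (simp add: sum_singles_lookup flip: sum_distrib_left sum_distrib_right)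
  then have "peval x (p * q) = (\<Sum>a\<in>Poly_Mapping.keys p. \<Sum>b\<in>Poly_Mapping.keys q.
        (Poly_Mapping.lookup p a * monom_eval x a) * (Poly_Mapping.lookup q b * monom_eval x b))"
    by (simp add: peval_sum mult_single monom_eval_add mult_ac)
  also have "\<dots> = peval x p * peval x q"
    by (simp add: peval_def sum_product)
  finally show ?thesis .
qed

lemma peval_mconst [simp]: "peval x (mconst c) = c"
  by (simp add: mconst_def)

lemma peval_mvar [simp]: "peval x (mvar i) = x i"
  by (simp add: mvar_def)

lemma mconst_mult: "mconst (a * b) = mconst a * mconst b"
  by (simp add: mconst_def mult_single)

lemma mconst_add: "mconst (a + b) = mconst a + mconst b"
  by (simp add: mconst_def single_add)

lemma mconst_sum: "mconst (sum f A) = (\<Sum>a\<in>A. mconst (f a))"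
  by (induction A rule: infinite_finite_induct) (simp_all add: mconst_def single_add)

lemma mconst_one [simp]: "mconst 1 = 1"
  by (simp add: mconst_def)

lemma mconst_numeral [simp]: "mconst (numeral k) = numeral k"
  by (simp add: mconst_def)

lemma lookup_mconst_mult: "Poly_Mapping.lookup (mconst c * p) m = c * Poly_Mapping.lookup p m"
  unfolding mconst_def mult_map_scale_conv_mult[symmetric]
  by (simp add: Poly_Mapping.map.rep_eq when_def)

section \<open>Linear forms\<close>

lemma mdeg_single [simp]: "mdeg (Poly_Mapping.single i k) = k"
  by (simp add: mdeg_def)

lemma mdeg_eq_0_iff [simp]: "mdeg m = 0 \<longleftrightarrow> m = 0"
  by (auto simp: mdeg_def in_keys_iff intro!: poly_mapping_eqI)

lemma mdeg_eq_1_imp_single: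
  assumes "mdeg m = 1"
  obtains i where "m = Poly_Mapping.single i 1"
proof -
  obtain i where i: "i \<in> Poly_Mapping.keys m"
    using assms by (force simp: mdeg_def)
  have "mdeg m = Poly_Mapping.lookup m i + (\<Sum>j\<in>Poly_Mapping.keys m - {i}. Poly_Mapping.lookup m j)"
    unfolding mdeg_def using i by (simp add: sum.remove)
  moreover have "Poly_Mapping.lookup m i \<noteq> 0"
    using i by (simp add: in_keys_iff)
  ultimately have "Poly_Mapping.lookup m i = 1"
    and "(\<Sum>j\<in>Poly_Mapping.keys m - {i}. Poly_Mapping.lookup m j) = 0"
    using assms by linarith+
  then have "Poly_Mapping.lookup m j = (1 when i = j)" for j
    by (cases "j = i") (auto simp: when_def in_keys_iff)
  then have "m = Poly_Mapping.single i 1"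
    by (intro poly_mapping_eqI) (simp add: lookup_single)
  then show thesis ..
qed

lemma single_Suc_0_eq_iff [simp]: "Poly_Mapping.single i (Suc 0) = Poly_Mapping.single j (Suc 0) \<longleftrightarrow> i = j"
  by (metis lookup_single_eq lookup_single_not_eq One_nat_def zero_neq_one)

lemma linear_form_iff_keys:
  "linear_form n l \<longleftrightarrow> Poly_Mapping.keys l \<subseteq> (\<lambda>i. Poly_Mapping.single i 1) ` {..n}"
proof
  assume l: "linear_form n l"
  show "Poly_Mapping.keys l \<subseteq> (\<lambda>i. Poly_Mapping.single i 1) ` {..n}"
  proof
    fix m assume m: "m \<in> Poly_Mapping.keys l"
    with l have "mdeg m = 1"
      unfolding linear_form_def homog_def by blast
    then obtain i where i: "m = Poly_Mapping.single i 1"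
      by (rule mdeg_eq_1_imp_single)
    with l m have "i \<le> n"
      unfolding linear_form_def polyring_def by simp
    with i show "m \<in> (\<lambda>i. Poly_Mapping.single i 1) ` {..n}" by blast
  qed
qed (auto simp: linear_form_def polyring_def homog_def)

lemma linear_form_add: "linear_form n p \<Longrightarrow> linear_form n q \<Longrightarrow> linear_form n (p + q)"
  unfolding linear_form_iff_keys using keys_add[of p q] by blast

lemma linear_form_diff: "linear_form n p \<Longrightarrow> linear_form n q \<Longrightarrow> linear_form n (p - q)"
  unfolding linear_form_iff_keys using keys_diff[of p q] by blast

lemma linear_form_scale: "linear_form n p \<Longrightarrow> linear_form n (mconst c * p)"
  unfolding linear_form_iff_keys by (auto simp: in_keys_iff lookup_mconst_mult)

lemma linear_form_zero [simp]: "linear_form n 0"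
  unfolding linear_form_iff_keys by simp

lemma linear_form_sum: "(\<And>a. a \<in> A \<Longrightarrow> linear_form n (f a)) \<Longrightarrow> linear_form n (sum f A)"
  by (induction A rule: infinite_finite_induct) (auto intro: linear_form_add)

lemma linear_form_imp_polyring: "linear_form n p \<Longrightarrow> p \<in> polyring n"
  unfolding linear_form_def by simp

lemma linear_form_eq_sum_mvar:
  assumes "linear_form n l"
  shows "l = (\<Sum>i\<le>n. mconst (Poly_Mapping.lookup l (Poly_Mapping.single i 1)) * mvar i)"
proof (rule poly_mapping_eqI)
  fix m
  have keys: "Poly_Mapping.keys l \<subseteq> (\<lambda>i. Poly_Mapping.single i 1) ` {..n}"
    using assms linear_form_iff_keys by blast
  have "Poly_Mapping.lookup (\<Sum>i\<le>n. mconst (Poly_Mapping.lookup l (Poly_Mapping.single i 1)) * mvar i) m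
      = (\<Sum>i\<le>n. if m = Poly_Mapping.single i 1 then Poly_Mapping.lookup l m else 0)"
    by (auto simp: mconst_def mvar_def mult_single lookup_sum lookup_single when_def intro!: sum.cong)
  also have "\<dots> = Poly_Mapping.lookup l m"
  proof (cases "\<exists>j\<le>n. m = Poly_Mapping.single j 1")
    case True
    then obtain j where j: "j \<le> n" and m: "m = Poly_Mapping.single j 1" by blast
    then have "{..n} \<inter> {i. m = Poly_Mapping.single i 1} = {j}"
      by (auto simp: m)
    then show ?thesis
      by (simp add: sum.If_cases m j)
  next
    case False
    then show ?thesis
      using keys by (auto simp: in_keys_iff)
  qed
  finally show "Poly_Mapping.lookup l m = Poly_Mapping.lookup (\<Sum>i\<le>n. mconst (Poly_Mapping.lookup l (Poly_Mapping.single i 1)) * mvar i) m" ..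
qed

lemma peval_linear_form:
  "linear_form n l \<Longrightarrow> peval x l = (\<Sum>i\<le>n. Poly_Mapping.lookup l (Poly_Mapping.single i 1) * x i)"
  by (subst linear_form_eq_sum_mvar) (simp_all add: peval_sum peval_mult)

lemma peval_linear_form_add:
  "linear_form n l \<Longrightarrow> peval (\<lambda>i. x i + y i) l = peval x l + peval y l"
  by (simp add: peval_linear_form distrib_left sum.distrib)

lemma peval_linear_form_origin: "linear_form n l \<Longrightarrow> \<forall>i\<le>n. x i = 0 \<Longrightarrow> peval x l = 0"
  by (simp add: peval_linear_form)

interpretation mpoly_vs: vector_space "\<lambda>c (p::mpoly). mconst c * p"
  by unfold_locales (auto simp: distrib_left distrib_right mconst_add mconst_mult mult.assoc)

lemma subspace_linear_forms: "mpoly_vs.subspace {l. linear_form n l}"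
  unfolding mpoly_vs.subspace_def by (auto intro: linear_form_add linear_form_scale)

lemma linear_form_span: "\<forall>a\<in>L. linear_form n a \<Longrightarrow> g \<in> mpoly_vs.span L \<Longrightarrow> linear_form n g"
  using mpoly_vs.span_minimal[OF _ subspace_linear_forms, of L n] by blast

lemma linear_form_in_span_mvar:
  "linear_form n g \<Longrightarrow> mvar ` {..n} \<subseteq> mpoly_vs.span B \<Longrightarrow> g \<in> mpoly_vs.span B"
  by (subst linear_form_eq_sum_mvar) (auto intro!: mpoly_vs.span_sum mpoly_vs.span_scale)

text \<open>Extend a basis of \<open>span L\<close> by variables to a basis of all linear forms; the coordinate
  functionals of the added basis vectors are the points.\<close>
lemma linear_forms_test_points:
  assumes L: "\<forall>a\<in>L. linear_form n a"
  obtains P where "finite P" and "\<forall>x\<in>P. \<forall>a\<in>L. peval x a = 0"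
    and "\<And>g. linear_form n g \<Longrightarrow> \<forall>x\<in>P. peval x g = 0 \<Longrightarrow> g \<in> mpoly_vs.span L"
proof -
  obtain BL where BL: "BL \<subseteq> L" "mpoly_vs.independent BL" "L \<subseteq> mpoly_vs.span BL"
    using mpoly_vs.maximal_independent_subset by blast
  obtain B where B: "BL \<subseteq> B" "B \<subseteq> BL \<union> mvar ` {..n}" "mpoly_vs.independent B"
      "BL \<union> mvar ` {..n} \<subseteq> mpoly_vs.span B"
    using mpoly_vs.maximal_independent_subset_extend[of BL "BL \<union> mvar ` {..n}"] BL(2) by blast
  define coord where "coord b = (\<lambda>i. mpoly_vs.representation B (mvar i) b)" for b
  have mvar_B: "mvar ` {..n} \<subseteq> mpoly_vs.span B"
    using B(4) by blast
  have peval_coord: "peval (coord b) g = mpoly_vs.representation B g b" if g: "linear_form n g" for g b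
  proof -
    have "mpoly_vs.representation B g b = mpoly_vs.representation B
        (\<Sum>i\<le>n. mconst (Poly_Mapping.lookup g (Poly_Mapping.single i 1)) * mvar i) b"
      by (subst linear_form_eq_sum_mvar[OF g]) simp
    also have "\<dots> = (\<Sum>i\<le>n. Poly_Mapping.lookup g (Poly_Mapping.single i 1) * mpoly_vs.representation B (mvar i) b)"
      using mvar_B B(3)
      by (subst mpoly_vs.representation_sum)
        (auto intro!: sum.cong mpoly_vs.span_scale simp: mpoly_vs.representation_scale)
    also have "\<dots> = peval (coord b) g"
      by (simp add: peval_linear_form[OF g] coord_def)
    finally show ?thesis by simp
  qed
  show thesis
  proof
    show "finite (coord ` (B - BL))"
      using B(2) by (auto intro: finite_subset[of _ "mvar ` {..n}"])
    show "\<forall>x\<in>coord ` (B - BL). \<forall>a\<in>L. peval x a = 0"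
    proof (intro ballI)
      fix x a assume "x \<in> coord ` (B - BL)" and a: "a \<in> L"
      then obtain b where b: "b \<notin> BL" "x = coord b" by blast
      have "peval x a = mpoly_vs.representation B a b"
        using peval_coord L a b by simp
      also have "\<dots> = mpoly_vs.representation BL a b"
        using mpoly_vs.representation_extend[OF B(3), of a BL] BL(3) a B(1) by auto
      also have "\<dots> = 0"
        using mpoly_vs.representation_ne_zero b(1) by blast
      finally show "peval x a = 0" .
    qed
    fix g assume g: "linear_form n g" and vanish: "\<forall>x\<in>coord ` (B - BL). peval x g = 0"
    have support: "b \<in> BL" if "mpoly_vs.representation B g b \<noteq> 0" for b
      using that vanish peval_coord[OF g] mpoly_vs.representation_ne_zero by fastforce
    have "g = (\<Sum>b | mpoly_vs.representation B g b \<noteq> 0. mconst (mpoly_vs.representation B g b) * b)"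
      using mpoly_vs.sum_nonzero_representation_eq[OF B(3) linear_form_in_span_mvar[OF g mvar_B]] by simp
    also have "\<dots> \<in> mpoly_vs.span BL"
      by (rule mpoly_vs.span_sum, rule mpoly_vs.span_scale, rule mpoly_vs.span_base) (use support in auto)
    finally show "g \<in> mpoly_vs.span L"
      using mpoly_vs.span_mono[OF BL(1)] by blast
  qed
qed

section \<open>Sums of squares of linear forms and reflections\<close>

definition polar_form :: "nat \<Rightarrow> (nat \<Rightarrow> mpoly) \<Rightarrow> (nat \<Rightarrow> real) \<Rightarrow> (nat \<Rightarrow> real) \<Rightarrow> real" where
  "polar_form r l x y = (\<Sum>i<r. peval x (l i) * peval y (l i))"

lemma peval_sum_squares: "peval x (\<Sum>i<r. l i * l i) = polar_form r l x x"
  by (simp add: polar_form_def peval_sum peval_mult)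

lemma polar_form_add_diag:
  assumes "\<forall>i<r. linear_form n (l i)"
  shows "polar_form r l (\<lambda>i. x i + y i) (\<lambda>i. x i + y i)
           = polar_form r l x x + 2 * polar_form r l x y + polar_form r l y y"
proof -
  have "polar_form r l (\<lambda>i. x i + y i) (\<lambda>i. x i + y i)
      = (\<Sum>i<r. (peval x (l i) + peval y (l i)) * (peval x (l i) + peval y (l i)))"
    unfolding polar_form_def using assms by (intro sum.cong refl) (simp add: peval_linear_form_add[of n])
  then show ?thesis
    by (simp add: polar_form_def algebra_simps sum.distrib sum_distrib_left)
qed

lemma polar_form_eq_of_diag_eq:
  assumes "\<forall>i<r. linear_form n (l i)" and "\<forall>i<r. linear_form n (m i)"
    and "\<forall>z\<in>{x, y, \<lambda>i. x i + y i}. polar_form r l z z = polar_form r m z z"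
  shows "polar_form r l x y = polar_form r m x y"
  using assms(3) polar_form_add_diag[OF assms(1), of x y] polar_form_add_diag[OF assms(2), of x y]
  by simp

lemma polar_form_eq_of_sum_squares_eq:
  assumes "\<forall>i<r. linear_form n (l i)" and "\<forall>i<r. linear_form n (m i)"
    and "(\<Sum>i<r. l i * l i) = (\<Sum>i<r. m i * m i)"
  shows "polar_form r l x y = polar_form r m x y"
  using assms by (intro polar_form_eq_of_diag_eq) (auto simp flip: peval_sum_squares)

text \<open>Householder reflection in the hyperplane \<open>w\<^sup>\<bottom>\<close>, acting on the vector \<open>(v 0, \<dots>, v (r - 1))\<close>.\<close>
definition reflection :: "nat \<Rightarrow> (nat \<Rightarrow> real) \<Rightarrow> (nat \<Rightarrow> mpoly) \<Rightarrow> nat \<Rightarrow> mpoly" where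
  "reflection r w v i = v i - mconst (2 / (\<Sum>j<r. (w j)\<^sup>2) * w i) * (\<Sum>j<r. mconst (w j) * v j)"

lemma sum_squares_reflection:
  assumes "(\<Sum>j<r. (w j)\<^sup>2) \<noteq> 0"
  shows "(\<Sum>i<r. reflection r w v i * reflection r w v i) = (\<Sum>i<r. v i * v i)"
proof -
  define W where "W = (\<Sum>j<r. (w j)\<^sup>2)"
  define s where "s = (\<Sum>j<r. mconst (w j) * v j)"
  define c where "c i = mconst (2 / W * w i)" for i
  have "(\<Sum>i<r. c i * v i) = mconst (2 / W) * s"
    by (simp add: c_def s_def mconst_mult sum_distrib_left mult.assoc)
  moreover have "(\<Sum>i<r. c i * c i) = mconst (2 / W) * 2"
  proof -
    have "(\<Sum>i<r. c i * c i) = mconst (\<Sum>i<r. 2 / W * w i * (2 / W * w i))"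
      by (simp only: c_def mconst_sum mconst_mult)
    also have "(\<Sum>i<r. 2 / W * w i * (2 / W * w i)) = 2 / W * (2 / W) * (\<Sum>i<r. (w i)\<^sup>2)"
      by (simp add: sum_distrib_left power2_eq_square mult_ac)
    also have "\<dots> = 2 / W * 2"
      using assms by (simp add: W_def)
    finally show ?thesis
      by (simp only: mconst_mult mconst_numeral)
  qed
  moreover have "reflection r w v i * reflection r w v i = v i * v i - 2 * s * (c i * v i) + s * s * (c i * c i)" for i
    by (simp add: reflection_def c_def s_def W_def algebra_simps)
  ultimately show ?thesis
    by (simp add: sum.distrib sum_subtractf flip: sum_distrib_left)
qed

lemma peval_reflection:
  "peval x (reflection r w v i)
     = peval x (v i) - 2 / (\<Sum>j<r. (w j)\<^sup>2) * w i * (\<Sum>j<r. w j * peval x (v j))"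
  by (simp add: reflection_def peval_diff peval_mult peval_sum)

lemma linear_form_reflection:
  "i < r \<Longrightarrow> \<forall>j<r. linear_form n (v j) \<Longrightarrow> linear_form n (reflection r w v i)"
  unfolding reflection_def by (auto intro!: linear_form_diff linear_form_scale linear_form_sum)

text \<open>If the vectors \<open>a = l(p)\<close> and \<open>b = v(p)\<close> differ, the reflection in \<open>w = b - a\<close> maps \<open>b\<close>
  to \<open>a\<close> (they have the same length) and fixes every \<open>v(q) = l(q)\<close>, \<open>q \<in> Q\<close> (it is orthogonal to \<open>w\<close>).\<close>
lemma reflection_step:
  assumes l: "\<forall>i<r. linear_form n (l i)" and v: "\<forall>i<r. linear_form n (v i)"
    and polar: "\<forall>x\<in>insert p Q. \<forall>y\<in>insert p Q. polar_form r l x y = polar_form r v x y"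
    and agree: "\<forall>q\<in>Q. \<forall>i<r. peval q (v i) = peval q (l i)"
  obtains v' where "\<forall>i<r. linear_form n (v' i)" and "(\<Sum>i<r. v' i * v' i) = (\<Sum>i<r. v i * v i)"
    and "\<forall>q\<in>insert p Q. \<forall>i<r. peval q (v' i) = peval q (l i)"
proof -
  define a where "a i = peval p (l i)" for i
  define b where "b i = peval p (v i)" for i
  define w where "w i = b i - a i" for i
  define W where "W = (\<Sum>i<r. (w i)\<^sup>2)"
  show thesis
  proof (cases "W = 0")
    case True
    then have "\<forall>i<r. w i = 0"
      by (simp add: W_def sum_nonneg_eq_0_iff)
    then show thesis
      using that[of v] v agree by (simp add: w_def a_def b_def)
  next
    case False
    have "(\<Sum>i<r. a i * a i) = (\<Sum>i<r. b i * b i)"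
      using polar by (simp add: polar_form_def a_def b_def)
    then have wb: "(\<Sum>j<r. w j * b j) = W / 2"
      by (simp add: W_def w_def power2_eq_square algebra_simps sum_subtractf sum.distrib sum_distrib_left)
    have "peval p (reflection r w v i) = peval p (l i)" for i
      using False by (simp add: peval_reflection wb flip: W_def b_def) (simp add: w_def a_def)
    moreover have "peval q (reflection r w v i) = peval q (l i)" if q: "q \<in> Q" and i: "i < r" for q i
    proof -
      have "polar_form r l p q = polar_form r v p q"
        using polar q by blast
      then have "(\<Sum>j<r. w j * peval q (v j)) = 0"
        using agree q by (simp add: polar_form_def w_def a_def b_def algebra_simps sum_subtractf)
      then show ?thesis
        using agree q i by (simp add: peval_reflection)
    qed
    ultimately show thesis
      using that[of "reflection r w v"] linear_form_reflection[OF _ v] sum_squares_reflection[OF False[unfolded W_def]]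
      by blast
  qed
qed

lemma sum_squares_transport:
  assumes l: "\<forall>i<r. linear_form n (l i)" and m: "\<forall>i<r. linear_form n (m i)"
    and "finite P" and "\<forall>x\<in>P. \<forall>y\<in>P. polar_form r l x y = polar_form r m x y"
  obtains v where "\<forall>i<r. linear_form n (v i)" and "(\<Sum>i<r. v i * v i) = (\<Sum>i<r. m i * m i)"
    and "\<forall>q\<in>P. \<forall>i<r. peval q (v i) = peval q (l i)"
  using assms(3,4)
proof (induction P arbitrary: thesis rule: finite_induct)
  case empty
  then show ?case using m by blast
next
  case (insert p Q)
  then obtain v where v: "\<forall>i<r. linear_form n (v i)" "(\<Sum>i<r. v i * v i) = (\<Sum>i<r. m i * m i)"
    and agree: "\<forall>q\<in>Q. \<forall>i<r. peval q (v i) = peval q (l i)"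
    by blast
  have "\<forall>x\<in>insert p Q. \<forall>y\<in>insert p Q. polar_form r l x y = polar_form r v x y"
    using insert.prems(2) polar_form_eq_of_sum_squares_eq[OF v(1) m v(2)] by simp
  then obtain v' where "\<forall>i<r. linear_form n (v' i)" "(\<Sum>i<r. v' i * v' i) = (\<Sum>i<r. v i * v i)"
    "\<forall>q\<in>insert p Q. \<forall>i<r. peval q (v' i) = peval q (l i)"
    using reflection_step[OF l v(1) _ agree] by blast
  then show ?case
    using insert.prems(1) v(2) by simp
qed

section \<open>Ideals and saturation\<close>

lemma polyring_add: "p \<in> polyring n \<Longrightarrow> q \<in> polyring n \<Longrightarrow> p + q \<in> polyring n"
  unfolding polyring_def using keys_add[of p q] by blast

lemma polyring_diff: "p \<in> polyring n \<Longrightarrow> q \<in> polyring n \<Longrightarrow> p - q \<in> polyring n"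
  unfolding polyring_def using keys_diff[of p q] by blast

lemma polyring_mult:
  assumes "p \<in> polyring n" and "q \<in> polyring n"
  shows "p * q \<in> polyring n"
  unfolding polyring_def
proof (intro CollectI ballI)
  fix m i assume "m \<in> Poly_Mapping.keys (p * q)" and i: "i \<in> Poly_Mapping.keys m"
  then obtain a b where "m = a + b" "a \<in> Poly_Mapping.keys p" "b \<in> Poly_Mapping.keys q"
    using keys_mult[of p q] by blast
  with i keys_add[of a b] assms show "i \<le> n"
    unfolding polyring_def by blast
qed

lemma polyring_zero [simp]: "0 \<in> polyring n"
  by (simp add: polyring_def)

lemma polyring_mconst [simp]: "mconst c \<in> polyring n"
  by (simp add: polyring_def mconst_def)

lemma is_ideal_add: "is_ideal n I \<Longrightarrow> p \<in> I \<Longrightarrow> q \<in> I \<Longrightarrow> p + q \<in> I"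
  unfolding is_ideal_def by blast

lemma is_ideal_mult: "is_ideal n I \<Longrightarrow> p \<in> I \<Longrightarrow> q \<in> polyring n \<Longrightarrow> q * p \<in> I"
  unfolding is_ideal_def by blast

lemma is_ideal_uminus: "is_ideal n I \<Longrightarrow> p \<in> I \<Longrightarrow> - p \<in> I"
  using is_ideal_mult[OF _ _ polyring_mconst[of "-1"]] by (simp add: mconst_def single_uminus)

lemma is_ideal_diff: "is_ideal n I \<Longrightarrow> p \<in> I \<Longrightarrow> q \<in> I \<Longrightarrow> p - q \<in> I"
  using is_ideal_add[of n I p "- q"] is_ideal_uminus[of n I q] by simp

lemma is_ideal_sum: "is_ideal n I \<Longrightarrow> (\<And>a. a \<in> A \<Longrightarrow> f a \<in> I) \<Longrightarrow> sum f A \<in> I"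
proof (induction A rule: infinite_finite_induct)
  case (insert x F)
  then show ?case by (simp add: is_ideal_add)
qed (simp_all add: is_ideal_def)

lemma is_ideal_imp_subspace: "is_ideal n I \<Longrightarrow> mpoly_vs.subspace I"
  unfolding mpoly_vs.subspace_def is_ideal_def by auto

lemma ideal_gen_least: "is_ideal n J \<Longrightarrow> S \<subseteq> J \<Longrightarrow> ideal_gen n S \<subseteq> J"
  unfolding ideal_gen_def by blast

lemma mem_saturation: "p \<in> polyring n \<Longrightarrow> p \<in> I \<Longrightarrow> p \<in> saturation n I"
  unfolding saturation_def by (auto intro!: exI[of _ 0])

lemma is_ideal_vanishing: "is_ideal n {p \<in> polyring n. \<forall>x\<in>\<Lambda>. peval x p = 0}"
  unfolding is_ideal_def by (simp add: polyring_add polyring_mult peval_add peval_mult)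

lemma peval_saturation_eq_0:
  assumes "p \<in> saturation n I" and "\<forall>q\<in>I. peval x q = 0" and "i \<le> n" and "x i \<noteq> 0"
  shows "peval x p = 0"
proof -
  obtain k where "\<And>m. mdeg m = k \<Longrightarrow> \<forall>j\<in>Poly_Mapping.keys m. j \<le> n \<Longrightarrow> Poly_Mapping.single m 1 * p \<in> I"
    using assms(1) unfolding saturation_def by blast
  then have "Poly_Mapping.single (Poly_Mapping.single i k) 1 * p \<in> I"
    using assms(3) by simp
  then have "x i ^ k * peval x p = 0"
    using assms(2) by (fastforce simp: peval_mult)
  then show ?thesis
    using assms(4) by simp
qed

section \<open>Gluing along \<open>Span(X) \<inter> Span(Y)\<close>\<close>

lemma sos_lin_mod_iff_indexed:
  "sos_lin_mod n I r F \<longleftrightarrow> (\<exists>l. (\<forall>i<r. linear_form n (l i)) \<and> F - (\<Sum>i<r. l i * l i) \<in> I)"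
proof
  assume "sos_lin_mod n I r F"
  then obtain ls where ls: "length ls \<le> r" "\<forall>l\<in>set ls. linear_form n l" "F - (\<Sum>l\<leftarrow>ls. l * l) \<in> I"
    unfolding sos_lin_mod_def by blast
  define l where "l i = (if i < length ls then ls ! i else 0)" for i
  have "(\<Sum>i<r. l i * l i) = (\<Sum>i<length ls. ls ! i * ls ! i)"
    unfolding l_def by (rule sum.mono_neutral_cong_right) (use ls(1) in auto)
  also have "\<dots> = (\<Sum>l\<leftarrow>ls. l * l)"
    by (simp add: sum_list_sum_nth atLeast0LessThan)
  finally show "\<exists>l. (\<forall>i<r. linear_form n (l i)) \<and> F - (\<Sum>i<r. l i * l i) \<in> I"
    using ls(2,3) by (intro exI[of _ l]) (auto simp: l_def)
next
  assume "\<exists>l. (\<forall>i<r. linear_form n (l i)) \<and> F - (\<Sum>i<r. l i * l i) \<in> I"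
  then obtain l where "\<forall>i<r. linear_form n (l i)" "F - (\<Sum>i<r. l i * l i) \<in> I"
    by blast
  then show "sos_lin_mod n I r F"
    unfolding sos_lin_mod_def
    by (intro exI[of _ "map l [0..<r]"])
      (auto simp: interv_sum_list_conv_sum_set_nat atLeast0LessThan comp_def)
qed

lemma sum_squares_add_ideal:
  assumes I: "is_ideal n I" and "\<forall>i<r. l i \<in> polyring n" and "\<forall>i<r. a i \<in> I"
    and "F - (\<Sum>i<r. l i * l i) \<in> I"
  shows "F - (\<Sum>i<r. (l i + a i) * (l i + a i)) \<in> I"
proof -
  have "F - (\<Sum>i<r. (l i + a i) * (l i + a i))
      = (F - (\<Sum>i<r. l i * l i)) - (\<Sum>i<r. (2 * l i + a i) * a i)"
  proof -
    have "(l i + a i) * (l i + a i) = l i * l i + (2 * l i + a i) * a i" for i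
      by (simp only: distrib_left distrib_right mult_2 mult_2_right mult.commute add.assoc add.left_commute)
    then show ?thesis
      by (simp add: sum.distrib diff_diff_eq)
  qed
  also have "\<dots> \<in> I"
  proof (rule is_ideal_diff[OF I _ is_ideal_sum[OF I]])
    fix i assume "i \<in> {..<r}"
    then have "l i \<in> polyring n" and a: "a i \<in> I"
      using assms(2,3) by auto
    moreover have "a i \<in> polyring n"
      using I a by (auto simp: is_ideal_def)
    ultimately show "(2 * l i + a i) * a i \<in> I"
      unfolding mult_2 by (intro is_ideal_mult[OF I a] polyring_add)
  qed fact
  finally show ?thesis .
qed

lemma sum_squares_agree_on_span_intersection:
  assumes IX: "is_ideal n IX" and IY: "is_ideal n IY"
    and inter: "inter_ideal n IX IY = inter_ideal n (span_ideal n IX) (span_ideal n IY)"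
    and l: "\<forall>i<r. linear_form n (l i)" "F - (\<Sum>i<r. l i * l i) \<in> IX"
    and m: "\<forall>i<r. linear_form n (m i)" "F - (\<Sum>i<r. m i * m i) \<in> IY"
    and x: "\<forall>a\<in>IX \<union> IY. linear_form n a \<longrightarrow> peval x a = 0"
  shows "polar_form r l x x = polar_form r m x x"
proof -
  define D where "D = (F - (\<Sum>i<r. m i * m i)) - (F - (\<Sum>i<r. l i * l i))"
  have "IX \<subseteq> polyring n" "IY \<subseteq> polyring n"
    using IX IY by (simp_all add: is_ideal_def)
  then have D_polyring: "D \<in> polyring n"
    unfolding D_def using l(2) m(2) by (blast intro: polyring_diff)
  have "D \<in> ideal_gen n (IX \<union> IY)"
    unfolding ideal_gen_def D_def using l(2) m(2) by (blast intro: is_ideal_diff)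
  then have "D \<in> saturation n (ideal_gen n (span_ideal n IX \<union> span_ideal n IY))"
    using inter mem_saturation[OF D_polyring] unfolding inter_ideal_def by blast
  moreover have "ideal_gen n (span_ideal n IX \<union> span_ideal n IY) \<subseteq> {p \<in> polyring n. \<forall>y\<in>{x}. peval y p = 0}"
    using x unfolding span_ideal_def
    by (intro ideal_gen_least[OF is_ideal_vanishing] Un_least)
      (auto intro!: ideal_gen_least[OF is_ideal_vanishing] linear_form_imp_polyring)
  ultimately have vanish: "peval x D = 0" if "i \<le> n" "x i \<noteq> 0" for i
    using that by (intro peval_saturation_eq_0) auto
  show ?thesis
  proof (cases "\<exists>i\<le>n. x i \<noteq> 0")
    case True
    then have "peval x D = 0"
      using vanish by blast
    then show ?thesis
      by (simp add: D_def peval_diff peval_sum_squares)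
  next
    case False
    then show ?thesis
      using l(1) m(1) by (auto simp: polar_form_def peval_linear_form_origin[of n] intro!: sum.neutral)
  qed
qed

lemma polar_forms_agree_on_span_intersection:
  assumes IX: "is_ideal n IX" and IY: "is_ideal n IY"
    and inter: "inter_ideal n IX IY = inter_ideal n (span_ideal n IX) (span_ideal n IY)"
    and l: "\<forall>i<r. linear_form n (l i)" "F - (\<Sum>i<r. l i * l i) \<in> IX"
    and m: "\<forall>i<r. linear_form n (m i)" "F - (\<Sum>i<r. m i * m i) \<in> IY"
    and x: "\<forall>a\<in>IX \<union> IY. linear_form n a \<longrightarrow> peval x a = 0"
    and y: "\<forall>a\<in>IX \<union> IY. linear_form n a \<longrightarrow> peval y a = 0"
  shows "polar_form r l x y = polar_form r m x y"
proof (rule polar_form_eq_of_diag_eq[OF l(1) m(1)], intro ballI)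
  fix z assume "z \<in> {x, y, \<lambda>i. x i + y i}"
  then have "\<forall>a\<in>IX \<union> IY. linear_form n a \<longrightarrow> peval z a = 0"
    using x y by (auto simp: peval_linear_form_add)
  then show "polar_form r l z z = polar_form r m z z"
    by (rule sum_squares_agree_on_span_intersection[OF IX IY inter l m])
qed

lemma linear_form_split_ideals:
  assumes IX: "is_ideal n IX" and IY: "is_ideal n IY"
    and "g \<in> mpoly_vs.span {a \<in> IX \<union> IY. linear_form n a}"
  obtains a b where "g = a + b" and "a \<in> IX" "linear_form n a" and "b \<in> IY" "linear_form n b"
proof -
  have "{a \<in> IX \<union> IY. linear_form n a} = {a \<in> IX. linear_form n a} \<union> {b \<in> IY. linear_form n b}"
    by blast
  with assms(3) have "g \<in> mpoly_vs.span ({a \<in> IX. linear_form n a} \<union> {b \<in> IY. linear_form n b})"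
    by simp
  then obtain a b where "g = a + b"
    and a: "a \<in> mpoly_vs.span {a \<in> IX. linear_form n a}" and b: "b \<in> mpoly_vs.span {b \<in> IY. linear_form n b}"
    unfolding mpoly_vs.span_Un by blast
  moreover have "a \<in> IX"
    using a mpoly_vs.span_minimal[OF _ is_ideal_imp_subspace[OF IX], of "{a \<in> IX. linear_form n a}"] by blast
  moreover have "b \<in> IY"
    using b mpoly_vs.span_minimal[OF _ is_ideal_imp_subspace[OF IY], of "{b \<in> IY. linear_form n b}"] by blast
  moreover have "linear_form n a"
    using a linear_form_span[of "{a \<in> IX. linear_form n a}" n a] by blast
  moreover have "linear_form n b"
    using b linear_form_span[of "{b \<in> IY. linear_form n b}" n b] by blast
  ultimately show thesis
    using that by simp
qed

lemma span_intersection_test_points: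
  assumes IX: "is_ideal n IX" and IY: "is_ideal n IY"
  obtains P where "finite P" and "\<forall>x\<in>P. \<forall>a\<in>IX \<union> IY. linear_form n a \<longrightarrow> peval x a = 0"
    and "\<And>g. linear_form n g \<Longrightarrow> \<forall>x\<in>P. peval x g = 0 \<Longrightarrow>
           \<exists>a b. g = a + b \<and> a \<in> IX \<and> linear_form n a \<and> b \<in> IY \<and> linear_form n b"
proof -
  obtain P where "finite P" and "\<forall>x\<in>P. \<forall>a\<in>{a \<in> IX \<union> IY. linear_form n a}. peval x a = 0"
    and span: "\<And>g. linear_form n g \<Longrightarrow> \<forall>x\<in>P. peval x g = 0 \<Longrightarrow> g \<in> mpoly_vs.span {a \<in> IX \<union> IY. linear_form n a}"
    using linear_forms_test_points[of "{a \<in> IX \<union> IY. linear_form n a}" n] by blast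
  moreover have "\<exists>a b. g = a + b \<and> a \<in> IX \<and> linear_form n a \<and> b \<in> IY \<and> linear_form n b"
    if "linear_form n g" "\<forall>x\<in>P. peval x g = 0" for g
    by (rule linear_form_split_ideals[OF IX IY span[OF that]]) blast
  ultimately show thesis
    using that by blast
qed

lemma sos_lin_mod_Int_decomposition:
  assumes IX: "is_ideal n IX" and IY: "is_ideal n IY"
    and l: "\<forall>i<r. linear_form n (l i)" "F - (\<Sum>i<r. l i * l i) \<in> IX"
    and v: "\<forall>i<r. linear_form n (v i)" "F - (\<Sum>i<r. v i * v i) \<in> IY"
    and ab: "\<forall>i<r. l i - v i = a i + b i \<and> a i \<in> IX \<and> linear_form n (a i) \<and> b i \<in> IY \<and> linear_form n (b i)"
  shows "sos_lin_mod n (IX \<inter> IY) r F"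
proof -
  define k where "k i = v i + b i" for i
  have k_X: "k i = l i + - a i" if "i < r" for i
    using ab that by (simp add: k_def algebra_simps)
  have "F - (\<Sum>i<r. (l i + - a i) * (l i + - a i)) \<in> IX"
    using l ab IX by (intro sum_squares_add_ideal) (auto intro: linear_form_imp_polyring is_ideal_uminus)
  moreover have "F - (\<Sum>i<r. (v i + b i) * (v i + b i)) \<in> IY"
    using v ab IY by (intro sum_squares_add_ideal) (auto intro: linear_form_imp_polyring)
  ultimately have "F - (\<Sum>i<r. k i * k i) \<in> IX \<inter> IY"
    using k_X by (simp add: k_def)
  moreover have "\<forall>i<r. linear_form n (k i)"
    using v(1) ab by (simp add: k_def linear_form_add)
  ultimately show ?thesis
    using sos_lin_mod_iff_indexed by blast
qed

theorem theorem5p2: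
  fixes n r :: nat and IX IY :: "mpoly set" and F :: mpoly
  assumes "subscheme_ideal n IX" and "subscheme_ideal n IY"
    and "inter_ideal n IX IY = inter_ideal n (span_ideal n IX) (span_ideal n IY)"
    and "F \<in> polyring n" and "homog 2 F"
    and "sos_lin_mod n IX r F" and "sos_lin_mod n IY r F"
  shows "sos_lin_mod n (IX \<inter> IY) r F"
proof -
  have IX: "is_ideal n IX" and IY: "is_ideal n IY"
    using assms(1,2) by (simp_all add: subscheme_ideal_def homogeneous_ideal_def)
  obtain l where l: "\<forall>i<r. linear_form n (l i)" "F - (\<Sum>i<r. l i * l i) \<in> IX"
    using assms(6) sos_lin_mod_iff_indexed by blast
  obtain m where m: "\<forall>i<r. linear_form n (m i)" "F - (\<Sum>i<r. m i * m i) \<in> IY"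
    using assms(7) sos_lin_mod_iff_indexed by blast
  obtain P where P: "finite P" "\<forall>x\<in>P. \<forall>a\<in>IX \<union> IY. linear_form n a \<longrightarrow> peval x a = 0"
    and split: "\<And>g. linear_form n g \<Longrightarrow> \<forall>x\<in>P. peval x g = 0 \<Longrightarrow>
           \<exists>a b. g = a + b \<and> a \<in> IX \<and> linear_form n a \<and> b \<in> IY \<and> linear_form n b"
    by (fact span_intersection_test_points[OF IX IY])
  have "\<forall>x\<in>P. \<forall>y\<in>P. polar_form r l x y = polar_form r m x y"
    using P(2) polar_forms_agree_on_span_intersection[OF IX IY assms(3) l m] by blast
  then obtain v where v: "\<forall>i<r. linear_form n (v i)" "(\<Sum>i<r. v i * v i) = (\<Sum>i<r. m i * m i)"
    and agree: "\<forall>q\<in>P. \<forall>i<r. peval q (v i) = peval q (l i)"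
    using sum_squares_transport[OF l(1) m(1) P(1)] by blast
  have "\<exists>a b. l i - v i = a + b \<and> a \<in> IX \<and> linear_form n a \<and> b \<in> IY \<and> linear_form n b"
    if "i < r" for i
  proof (rule split)
    show "linear_form n (l i - v i)"
      using that l(1) v(1) by (simp add: linear_form_diff)
    show "\<forall>x\<in>P. peval x (l i - v i) = 0"
      using that agree by (simp add: peval_diff)
  qed
  then obtain a b where "\<forall>i<r. l i - v i = a i + b i \<and> a i \<in> IX \<and> linear_form n (a i) \<and> b i \<in> IY \<and> linear_form n (b i)"
    by metis
  moreover have "F - (\<Sum>i<r. v i * v i) \<in> IY"
    using m(2) v(2) by simp
  ultimately show ?thesis
    using sos_lin_mod_Int_decomposition[OF IX IY l v(1)] by blast
qed

end
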